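(* Consider the model in the context with constant jump probability $p$, and let $\Psi^{(n)}=\sum_{i=1}^{\upsilon^{(n)}}\tilde{J}_i\,e^{-2\alpha(T_{\tilde{\mathrm{I}}^{(n)}_i+1}+\dots+T_n)}$. Then there is a constant $C>0$ depending only on $\alpha$ such that, as $n\to\infty$, $$\mathrm{Cov}\big(e^{-2\alpha U^{(n)}},\,\mathbb{E}[\Psi^{(n)}\mid\mathcal{Y}_n]\big)\lesssim pC\begin{cases}n^{-4\alpha},&0<\alpha<1/2,\\ n^{-2}\ln n,&\alpha=1/2,\\ n^{-(2\alpha+1)},&\alpha>1/2.\end{cases}$$
   Context: Tree: a Yule tree with birth rate $1$ conditioned on $n$ tips. $T_1,\dots,T_n$ are independent with $T_k\sim\mathrm{Exp}(k)$; starting from one lineage at the origin (time $0$), the $k$-th speciation event (internal node $k$, $k=1,\dots,n-1$, node $1$ the root) occurs at time $T_1+\dots+T_k$ and consists of a uniformly chosen one of the $k$ living lineages splitting in two; the tree height is $U^{(n)}=T_1+\dots+T_n$. Jumps: just after each speciation event, independently on each daughter lineage, a jump occurs with probability $p$. $\alpha>0$. $\mathcal{Y}_n$ is the $\sigma$-algebra generated by the tree (topology and $T_k$) and the jump pattern. Random pair: pick an unordered pair of distinct tips uniformly; let $m$ be the index of their most recent common ancestor node; $\upsilon^{(n)}$ is the number of internal nodes on the path from the root (inclusive) to node $m$, excluding $m$; $\tilde{\mathrm{I}}^{(n)}_1<\dots<\tilde{\mathrm{I}}^{(n)}_{\upsilon^{(n)}}$ their indices; $\tilde{J}_i=1$ iff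 a jump occurred just after speciation event $\tilde{\mathrm{I}}^{(n)}_i$ on the daughter lineage lying on the common path of the two tips. Notation: $a_n\lesssim b_n$ means $a_n\le(1+o(1))b_n$ as $n\to\infty$. *)

theory Defs
  imports "HOL-Probability.Probability"
begin

text \<open>Sample space of the model for n tips: a triple (T, (c, j)) where
  T k (k = 1..n) are the waiting times, T k ~ Exp(k), independent;
  c k (k = 1..n-1) is the label of the lineage splitting at speciation event k:
    just before event k the k living lineages carry labels 0..k-1; at event k the
    lineage labelled c k (uniform in {0..k-1}) splits; the daughter keeping the label
    c k is the "old" daughter, the other daughter gets the new label k;
  j k = (jump on old daughter, jump on new daughter) just after event k,
    independent Bernoulli(p).
  At the end the n tips carry labels 0..n-1.\<close>

definition yule_T :: "nat \<Rightarrow> (nat \<Rightarrow> real) measure" where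
  "yule_T n = PiM {1..n} (\<lambda>k. density lborel (exponential_density (real k)))"

definition yule_topo :: "nat \<Rightarrow> (nat \<Rightarrow> nat) pmf" where
  "yule_topo n = Pi_pmf {1..<n} 0 (\<lambda>k. pmf_of_set {..<k})"

definition yule_jumps :: "nat \<Rightarrow> real \<Rightarrow> (nat \<Rightarrow> bool \<times> bool) pmf" where
  "yule_jumps n p = Pi_pmf {1..<n} (False, False)
      (\<lambda>k. pair_pmf (bernoulli_pmf p) (bernoulli_pmf p))"

definition yule_space ::
  "nat \<Rightarrow> real \<Rightarrow> ((nat \<Rightarrow> real) \<times> ((nat \<Rightarrow> nat) \<times> (nat \<Rightarrow> bool \<times> bool))) measure" where
  "yule_space n p = yule_T n \<Otimes>\<^sub>M measure_pmf (pair_pmf (yule_topo n) (yule_jumps n p))"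

text \<open>Label, just after event k-1, of the ancestor of the lineage labelled l just after event k.\<close>
definition parent_label :: "(nat \<Rightarrow> nat) \<Rightarrow> nat \<Rightarrow> nat \<Rightarrow> nat" where
  "parent_label c k l = (if l = k then c k else l)"

primrec lab_steps :: "(nat \<Rightarrow> nat) \<Rightarrow> nat \<Rightarrow> nat \<Rightarrow> nat \<Rightarrow> nat" where
  "lab_steps c tp l 0 = l"
| "lab_steps c tp l (Suc i) = parent_label c (tp - i) (lab_steps c tp l i)"

text \<open>Label, just after event k (0 \<le> k \<le> n-1; event 0 = origin), of the ancestor of tip a.\<close>
definition tip_label :: "(nat \<Rightarrow> nat) \<Rightarrow> nat \<Rightarrow> nat \<Rightarrow> nat \<Rightarrow> nat" where
  "tip_label c n a k = lab_steps c (n - 1) a (n - 1 - k)"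

text \<open>Tip a descends from internal node k (1 \<le> k \<le> n-1).\<close>
definition passes :: "(nat \<Rightarrow> nat) \<Rightarrow> nat \<Rightarrow> nat \<Rightarrow> nat \<Rightarrow> bool" where
  "passes c n a k \<longleftrightarrow> tip_label c n a (k - 1) = c k"

text \<open>Jump indicator on the daughter lineage of node k that lies on the path to tip a.\<close>
definition jump_toward :: "(nat \<Rightarrow> nat) \<Rightarrow> (nat \<Rightarrow> bool \<times> bool) \<Rightarrow> nat \<Rightarrow> nat \<Rightarrow> nat \<Rightarrow> bool" where
  "jump_toward c j n a k = (if tip_label c n a k = k then snd (j k) else fst (j k))"

text \<open>Common ancestral internal nodes of tips a and b, their MRCA, and the path
  root..MRCA excluding the MRCA (indices I_1 < ... < I_upsilon).\<close>
definition common_nodes :: "(nat \<Rightarrow> nat) \<Rightarrow> nat \<Rightarrow> nat \<Rightarrow> nat \<Rightarrow> nat set" where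
  "common_nodes c n a b = {k \<in> {1..<n}. passes c n a k \<and> passes c n b k}"

definition mrca :: "(nat \<Rightarrow> nat) \<Rightarrow> nat \<Rightarrow> nat \<Rightarrow> nat \<Rightarrow> nat" where
  "mrca c n a b = Max (common_nodes c n a b)"

definition path_nodes :: "(nat \<Rightarrow> nat) \<Rightarrow> nat \<Rightarrow> nat \<Rightarrow> nat \<Rightarrow> nat set" where
  "path_nodes c n a b = common_nodes c n a b - {mrca c n a b}"

definition Psi_pair ::
  "real \<Rightarrow> nat \<Rightarrow> (nat \<Rightarrow> real) \<Rightarrow> (nat \<Rightarrow> nat) \<Rightarrow> (nat \<Rightarrow> bool \<times> bool) \<Rightarrow> nat \<Rightarrow> nat \<Rightarrow> real" where
  "Psi_pair \<alpha> n T c j a b =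
     (\<Sum>k\<in>path_nodes c n a b.
        (if jump_toward c j n a k then 1 else 0) * exp (- 2 * \<alpha> * (\<Sum>i\<in>{k+1..n}. T i)))"

text \<open>E[Psi^(n) | Y_n]: average over the uniformly chosen unordered pair of distinct tips,
  which is independent of Y_n.\<close>
definition cond_Psi ::
  "real \<Rightarrow> nat \<Rightarrow> (nat \<Rightarrow> real) \<times> ((nat \<Rightarrow> nat) \<times> (nat \<Rightarrow> bool \<times> bool)) \<Rightarrow> real" where
  "cond_Psi \<alpha> n \<omega> =
     (case \<omega> of (T, c, j) \<Rightarrow>
       (\<Sum>(a, b)\<in>{(a, b). a < b \<and> b < n}. Psi_pair \<alpha> n T c j a b) / real (n choose 2))"

definition height :: "nat \<Rightarrow> (nat \<Rightarrow> real) \<times> ((nat \<Rightarrow> nat) \<times> (nat \<Rightarrow> bool \<times> bool)) \<Rightarrow> real" where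
  "height n \<omega> = (\<Sum>i\<in>{1..n}. fst \<omega> i)"

definition covariance :: "'a measure \<Rightarrow> ('a \<Rightarrow> real) \<Rightarrow> ('a \<Rightarrow> real) \<Rightarrow> real" where
  "covariance M X Y = (\<integral>\<omega>. X \<omega> * Y \<omega> \<partial>M) - (\<integral>\<omega>. X \<omega> \<partial>M) * (\<integral>\<omega>. Y \<omega> \<partial>M)"

definition yule_cov :: "real \<Rightarrow> real \<Rightarrow> nat \<Rightarrow> real" where
  "yule_cov \<alpha> p n = covariance (yule_space n p)
      (\<lambda>\<omega>. exp (- 2 * \<alpha> * height n \<omega>)) (cond_Psi \<alpha> n)"

definition lemma5_rate :: "real \<Rightarrow> nat \<Rightarrow> real" where
  "lemma5_rate \<alpha> n =
     (if \<alpha> < 1/2 then real n powr (- 4 * \<alpha>)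
      else if \<alpha> = 1/2 then ln (real n) / (real n)^2
      else real n powr (- (2 * \<alpha> + 1)))"

end

theory Submission
  imports Defs
begin

text \<open>The conditional expectation \<open>E[\<Psi> | Y]\<close> is a linear combination
  \<open>\<Sum>\<^sub>k \<phi>\<^sub>k h\<^sub>k\<close> of the discounts \<open>h\<^sub>k = exp (-2\<alpha> (T\<^sub>k\<^sub>+\<^sub>1 + ... + T\<^sub>n))\<close>, where \<open>\<phi>\<^sub>k\<close>
  is the fraction of tip pairs whose common ancestral path carries a jump just after node
  \<open>k\<close>. The waiting times are independent of topology and jumps, so the covariance is
  \<open>\<Sum>\<^sub>k Cov(h\<^sub>0, h\<^sub>k) E \<phi>\<^sub>k\<close>. Moments of the \<open>h\<^sub>k\<close> are products of Laplace transforms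
  \<open>\<Prod> i / (i + \<beta>)\<close>, of order \<open>m powr -\<beta>\<close>, whence \<open>Cov(h\<^sub>0, h\<^sub>k) = O(k powr (2\<alpha> - 1) * n powr -4\<alpha>)\<close>.
  On the other side \<open>E \<phi>\<^sub>k \<le> 8p / k\<close>, because by a Polya urn argument node \<open>k\<close> has
  \<open>2n / (k + 1)\<close> descendant tips on average. Summing \<open>k powr (2\<alpha> - 2)\<close> over \<open>k < n\<close> gives
  the three regimes. The bound holds for every \<open>n \<ge> 3\<close>, so the \<open>o(1)\<close> term is zero.\<close>

section \<open>Products of Laplace transforms\<close>

text \<open>\<open>laplace_ratio \<beta> m n\<close> is the Laplace transform at \<open>\<beta>\<close> of \<open>T\<^sub>m\<^sub>+\<^sub>1 + ... + T\<^sub>n\<close>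
  with independent \<open>T\<^sub>i \<sim> Exp(i)\<close>.\<close>

definition laplace_ratio :: "real \<Rightarrow> nat \<Rightarrow> nat \<Rightarrow> real" where
  "laplace_ratio \<beta> m n = (\<Prod>i\<in>{m<..n}. real i / (real i + \<beta>))"

lemma laplace_ratio_split:
  assumes "m \<le> k" "k \<le> n"
  shows "laplace_ratio \<beta> m n = laplace_ratio \<beta> m k * laplace_ratio \<beta> k n"
proof -
  have "{m<..n} = {m<..k} \<union> {k<..n}" using assms by auto
  then show ?thesis
    unfolding laplace_ratio_def by (simp add: prod.union_disjoint ivl_disj_int_two(4))
qed

lemma laplace_ratio_zero [simp]: "laplace_ratio 0 m n = 1"
  unfolding laplace_ratio_def by (intro prod.neutral) auto

lemma laplace_ratio_nonneg: "0 \<le> \<beta> \<Longrightarrow> 0 \<le> laplace_ratio \<beta> m n"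
  unfolding laplace_ratio_def by (intro prod_nonneg) auto

lemma laplace_ratio_pos: "0 \<le> \<beta> \<Longrightarrow> 0 < laplace_ratio \<beta> m n"
  unfolding laplace_ratio_def by (intro prod_pos) auto

lemma laplace_ratio_eq_exp:
  assumes "0 \<le> \<beta>"
  shows "laplace_ratio \<beta> m n = exp (- (\<Sum>i\<in>{m<..n}. ln (1 + \<beta> / real i)))"
proof -
  have "real i / (real i + \<beta>) = exp (- ln (1 + \<beta> / real i))" if "m < i" for i
  proof -
    have "0 < real i" using that by simp
    with assms show ?thesis by (simp add: exp_minus field_simps add_pos_nonneg)
  qed
  then show ?thesis
    unfolding laplace_ratio_def sum_negf[symmetric] exp_sum[OF finite_greaterThanAtMost]
    by (intro prod.cong) auto
qed

lemma ln_one_plus_ge_diff_square: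
  assumes "0 \<le> (x::real)"
  shows "x - x\<^sup>2 \<le> ln (1 + x)"
proof (cases "x \<le> 1")
  case True
  then show ?thesis using ln_one_plus_pos_lower_bound[OF assms] by simp
next
  case False
  then have "x - x\<^sup>2 \<le> 0" by (simp add: power2_eq_square mult_le_cancel_left1)
  also have "0 \<le> ln (1 + x)" using assms by simp
  finally show ?thesis .
qed

lemma sum_inverse_squares_le:
  assumes "1 \<le> k" "k \<le> n"
  shows "(\<Sum>i\<in>{k<..n}. 1 / (real i)\<^sup>2) \<le> 1 / real k - 1 / real n"
  using assms(2)
proof (induction n rule: nat_induct_at_least)
  case (Suc n)
  have "{k<..Suc n} = insert (Suc n) {k<..n}" using Suc by auto
  moreover have "1 / (real (Suc n))\<^sup>2 \<le> 1 / real n - 1 / real (Suc n)"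
    using Suc assms(1) by (simp add: divide_simps power2_eq_square)
  ultimately show ?case using Suc.IH by simp
qed simp

lemma harm_le_one_plus_ln: "1 \<le> m \<Longrightarrow> harm m \<le> 1 + ln (real m)"
  using euler_mascheroni_sequence_decreasing[of 1 m] by (simp add: harm_def)

lemma laplace_ratio_lower:
  assumes "0 \<le> \<beta>" "1 \<le> m"
  shows "exp (- \<beta>) * real m powr (- \<beta>) \<le> laplace_ratio \<beta> 0 m"
proof -
  have "(\<Sum>i\<in>{0<..m}. ln (1 + \<beta> / real i)) \<le> (\<Sum>i\<in>{0<..m}. \<beta> * inverse (real i))"
    by (intro sum_mono) (use assms in \<open>auto intro!: ln_add_one_self_le_self simp: divide_inverse\<close>)
  also have "\<dots> = \<beta> * harm m"
    by (simp add: harm_def sum_distrib_left atLeastSucAtMost_greaterThanAtMost[symmetric])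
  also have "\<dots> \<le> \<beta> * (1 + ln (real m))"
    using harm_le_one_plus_ln[OF assms(2)] assms(1) by (rule mult_left_mono)
  finally show ?thesis
    using assms by (simp add: laplace_ratio_eq_exp powr_def mult_exp_exp algebra_simps)
qed

lemma laplace_ratio_upper:
  assumes "0 \<le> \<beta>" "1 \<le> m"
  shows "laplace_ratio \<beta> 0 m \<le> exp (2 * \<beta>\<^sup>2) * real m powr (- \<beta>)"
proof -
  have squares: "(\<Sum>i\<in>{0<..m}. 1 / (real i)\<^sup>2) \<le> 2"
  proof -
    have "{0<..m} = insert 1 {1<..m}" using assms(2) by auto
    moreover have "(\<Sum>i\<in>{1<..m}. 1 / (real i)\<^sup>2) \<le> 1"
    proof -
      have "0 \<le> 1 / real m" by simp
      then show ?thesis using sum_inverse_squares_le[OF order_refl assms(2)] by linarith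
    qed
    ultimately show ?thesis by simp
  qed
  have "\<beta> * ln (real m) - 2 * \<beta>\<^sup>2 \<le> \<beta> * harm m - \<beta>\<^sup>2 * (\<Sum>i\<in>{0<..m}. 1 / (real i)\<^sup>2)"
  proof -
    have "ln (real m) \<le> ln (real m + 1)" using assms(2) by simp
    also have "\<dots> \<le> harm m" by (rule ln_le_harm)
    finally have "\<beta> * ln (real m) \<le> \<beta> * harm m" using assms(1) by (rule mult_left_mono)
    moreover have "\<beta>\<^sup>2 * (\<Sum>i\<in>{0<..m}. 1 / (real i)\<^sup>2) \<le> \<beta>\<^sup>2 * 2"
      using squares by (rule mult_left_mono) simp
    ultimately show ?thesis by linarith
  qed
  also have "\<dots> = (\<Sum>i\<in>{0<..m}. \<beta> / real i - (\<beta> / real i)\<^sup>2)"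
    by (simp add: harm_def sum_subtractf sum_distrib_left atLeastSucAtMost_greaterThanAtMost[symmetric]
        divide_inverse power_mult_distrib power_inverse)
  also have "\<dots> \<le> (\<Sum>i\<in>{0<..m}. ln (1 + \<beta> / real i))"
    by (intro sum_mono ln_one_plus_ge_diff_square) (use assms in simp)
  finally show ?thesis
    using assms by (simp add: laplace_ratio_eq_exp powr_def mult_exp_exp algebra_simps)
qed

lemma laplace_ratio_double:
  assumes "0 \<le> \<beta>"
  shows "laplace_ratio (2 * \<beta>) k n =
    (laplace_ratio \<beta> k n)\<^sup>2 * (\<Prod>i\<in>{k<..n}. 1 + \<beta>\<^sup>2 / (real i * (real i + 2 * \<beta>)))"
proof -
  have "real i / (real i + 2 * \<beta>) =
      (real i / (real i + \<beta>))\<^sup>2 * (1 + \<beta>\<^sup>2 / (real i * (real i + 2 * \<beta>)))" if "k < i" for i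
  proof -
    have "0 < real i" using that by simp
    with assms show ?thesis by (simp add: divide_simps power2_eq_square) (simp add: algebra_simps)
  qed
  then show ?thesis
    unfolding laplace_ratio_def power2_eq_square prod.distrib[symmetric] by (intro prod.cong) auto
qed

lemma laplace_ratio_double_excess:
  assumes "0 \<le> \<beta>" "1 \<le> k" "k \<le> n"
  shows "laplace_ratio (2 * \<beta>) k n - (laplace_ratio \<beta> k n)\<^sup>2
    \<le> (laplace_ratio \<beta> k n)\<^sup>2 * (\<beta>\<^sup>2 * exp (\<beta>\<^sup>2) / real k)"
proof -
  define F where "F = (\<Prod>i\<in>{k<..n}. 1 + \<beta>\<^sup>2 / (real i * (real i + 2 * \<beta>)))"
  have "F \<le> (\<Prod>i\<in>{k<..n}. exp (\<beta>\<^sup>2 / (real i * (real i + 2 * \<beta>))))"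
    unfolding F_def by (intro prod_mono) (use assms(1) in \<open>auto simp: add.commute\<close>)
  also have "\<dots> = exp (\<Sum>i\<in>{k<..n}. \<beta>\<^sup>2 / (real i * (real i + 2 * \<beta>)))"
    by (simp add: exp_sum)
  also have "(\<Sum>i\<in>{k<..n}. \<beta>\<^sup>2 / (real i * (real i + 2 * \<beta>))) \<le> (\<Sum>i\<in>{k<..n}. \<beta>\<^sup>2 * (1 / (real i)\<^sup>2))"
  proof (intro sum_mono)
    fix i assume "i \<in> {k<..n}"
    then have "0 < real i" by simp
    with assms(1) show "\<beta>\<^sup>2 / (real i * (real i + 2 * \<beta>)) \<le> \<beta>\<^sup>2 * (1 / (real i)\<^sup>2)"
      by (simp add: power2_eq_square divide_simps) (simp add: algebra_simps)
  qed
  also have "\<dots> \<le> \<beta>\<^sup>2 / real k"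
  proof -
    have "(\<Sum>i\<in>{k<..n}. 1 / (real i)\<^sup>2) \<le> 1 / real k"
      using sum_inverse_squares_le[OF assms(2,3)] by (simp add: order_trans)
    then show ?thesis by (simp add: sum_distrib_left[symmetric] mult_left_mono divide_inverse)
  qed
  finally have F_le: "F \<le> exp (\<beta>\<^sup>2 / real k)" by simp
  have "exp (\<beta>\<^sup>2 / real k) - 1 \<le> \<beta>\<^sup>2 / real k * exp (\<beta>\<^sup>2 / real k)"
  proof -
    have "(1 - \<beta>\<^sup>2 / real k) * exp (\<beta>\<^sup>2 / real k) \<le> exp (- (\<beta>\<^sup>2 / real k)) * exp (\<beta>\<^sup>2 / real k)"
      using exp_ge_add_one_self[of "- (\<beta>\<^sup>2 / real k)"] by (intro mult_right_mono) auto
    then show ?thesis by (simp add: exp_minus field_simps)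
  qed
  also have "\<dots> \<le> \<beta>\<^sup>2 * exp (\<beta>\<^sup>2) / real k"
  proof -
    have "\<beta>\<^sup>2 / real k \<le> \<beta>\<^sup>2" using assms(2) by (simp add: divide_le_eq mult_le_cancel_left1)
    then have "exp (\<beta>\<^sup>2 / real k) \<le> exp (\<beta>\<^sup>2)" by simp
    then show ?thesis by (simp add: divide_right_mono mult_left_mono)
  qed
  finally have "F - 1 \<le> \<beta>\<^sup>2 * exp (\<beta>\<^sup>2) / real k" using F_le by simp
  then have "(laplace_ratio \<beta> k n)\<^sup>2 * (F - 1) \<le> (laplace_ratio \<beta> k n)\<^sup>2 * (\<beta>\<^sup>2 * exp (\<beta>\<^sup>2) / real k)"
    by (rule mult_left_mono) simp
  then show ?thesis
    unfolding laplace_ratio_double[OF assms(1)] F_def[symmetric] by (simp add: right_diff_distrib)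
qed

lemma laplace_ratio_cov_bound:
  assumes "0 \<le> \<beta>" "1 \<le> k" "k \<le> n"
  shows "laplace_ratio \<beta> 0 k * (laplace_ratio (2 * \<beta>) k n - (laplace_ratio \<beta> k n)\<^sup>2)
    \<le> \<beta>\<^sup>2 * exp (5 * \<beta>\<^sup>2 + \<beta>) * real k powr (\<beta> - 1) * real n powr (- 2 * \<beta>)"
proof -
  define A where "A = laplace_ratio \<beta> 0 k"
  define E where "E = laplace_ratio \<beta> k n"
  have A_pos: "0 < A" unfolding A_def by (rule laplace_ratio_pos[OF assms(1)])
  have "A * E \<le> exp (2 * \<beta>\<^sup>2) * real n powr (- \<beta>)"
    unfolding A_def E_def laplace_ratio_split[OF le0 assms(3), symmetric]
    using assms by (intro laplace_ratio_upper) auto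
  moreover have "0 \<le> A * E" using A_pos laplace_ratio_nonneg[OF assms(1)] by (simp add: E_def)
  ultimately have AE: "(A * E)\<^sup>2 \<le> (exp (2 * \<beta>\<^sup>2) * real n powr (- \<beta>))\<^sup>2"
    by (rule power_mono)
  have A_ge: "exp (- \<beta>) * real k powr (- \<beta>) \<le> A"
    unfolding A_def using assms by (intro laplace_ratio_lower) auto
  have "A * (laplace_ratio (2 * \<beta>) k n - E\<^sup>2) \<le> A * (E\<^sup>2 * (\<beta>\<^sup>2 * exp (\<beta>\<^sup>2) / real k))"
    unfolding E_def using laplace_ratio_double_excess[OF assms] A_pos by (intro mult_left_mono) auto
  also have "\<dots> = (A * E)\<^sup>2 / A * (\<beta>\<^sup>2 * exp (\<beta>\<^sup>2) / real k)"
    using A_pos by (simp add: power2_eq_square)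
  also have "\<dots> \<le> (exp (2 * \<beta>\<^sup>2) * real n powr (- \<beta>))\<^sup>2 / (exp (- \<beta>) * real k powr (- \<beta>))
      * (\<beta>\<^sup>2 * exp (\<beta>\<^sup>2) / real k)"
    using AE A_ge assms(2) by (intro mult_right_mono frac_le) auto
  also have "\<dots> = \<beta>\<^sup>2 * exp (5 * \<beta>\<^sup>2 + \<beta>) * real k powr (\<beta> - 1) * real n powr (- 2 * \<beta>)"
    using assms by (simp add: power2_eq_square powr_minus powr_diff powr_add[symmetric]
        mult_exp_exp exp_minus field_simps)
  finally show ?thesis unfolding A_def E_def .
qed

section \<open>Power sums\<close>

lemma powr_increment_ge:
  assumes "0 < s" "s < 1" "1 \<le> (m::real)"
  shows "s * (m + 1) powr (s - 1) \<le> (m + 1) powr s - m powr s"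
proof -
  have "(m / (m + 1)) powr s * 1 powr (1 - s) \<le> s * (m / (m + 1)) + (1 - s) * 1"
    by (rule Youngs_inequality_0) (use assms in auto)
  then have "m powr s \<le> (1 - s / (m + 1)) * (m + 1) powr s"
    using assms(3) by (simp add: powr_divide field_simps)
  also have "\<dots> = (m + 1) powr s - s * (m + 1) powr (s - 1)"
    using assms(3) by (simp add: powr_diff algebra_simps)
  finally show ?thesis by simp
qed

lemma sum_powr_le_concave:
  assumes "0 < s" "s < 1" "1 \<le> m"
  shows "(\<Sum>k\<in>{1..m}. real k powr (s - 1)) \<le> real m powr s / s"
  using assms(3)
proof (induction m rule: nat_induct_at_least)
  case (Suc m)
  have "s * real (Suc m) powr (s - 1) \<le> real (Suc m) powr s - real m powr s"
    using powr_increment_ge[OF assms(1,2), of "real m"] Suc by (simp add: add.commute)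
  then have "real (Suc m) powr (s - 1) \<le> (real (Suc m) powr s - real m powr s) / s"
    using assms(1) by (simp add: le_divide_eq mult.commute)
  then show ?case using Suc.IH by (simp add: diff_divide_distrib)
qed (use assms in simp)

lemma sum_powr_le:
  assumes "0 < s" "1 \<le> n"
  shows "(\<Sum>k\<in>{1..<n}. real k powr (s - 1)) \<le> (1 + 1 / s) * real n powr s"
proof -
  have "(\<Sum>k\<in>{1..<n}. real k powr (s - 1)) \<le> (\<Sum>k\<in>{1..n}. real k powr (s - 1))"
    by (intro sum_mono2) auto
  also have "\<dots> \<le> (1 + 1 / s) * real n powr s"
  proof (cases "s < 1")
    case True
    then have "(\<Sum>k\<in>{1..n}. real k powr (s - 1)) \<le> real n powr s / s"
      using assms by (intro sum_powr_le_concave)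
    also have "\<dots> \<le> (1 + 1 / s) * real n powr s" by (simp add: distrib_right)
    finally show ?thesis .
  next
    case False
    have "(\<Sum>k\<in>{1..n}. real k powr (s - 1)) \<le> (\<Sum>k\<in>{1..n}. real n powr (s - 1))"
      by (intro sum_mono powr_mono2) (use False in auto)
    also have "\<dots> = real n powr s" using assms(2) by (simp add: powr_diff field_simps)
    also have "\<dots> \<le> (1 + 1 / s) * real n powr s" using assms(1) by (simp add: distrib_right)
    finally show ?thesis .
  qed
  finally show ?thesis .
qed

lemma sum_inverse_le_one_plus_ln:
  assumes "1 \<le> n"
  shows "(\<Sum>k\<in>{1..<n}. real k powr (-1)) \<le> 1 + ln (real n)"
proof -
  have "(\<Sum>k\<in>{1..<n}. real k powr (-1)) \<le> (\<Sum>k\<in>{1..n}. real k powr (-1))"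
    by (intro sum_mono2) auto
  also have "\<dots> = (\<Sum>k\<in>{1..n}. inverse (real k))"
    by (intro sum.cong) (auto simp: powr_minus)
  also have "\<dots> \<le> 1 + ln (real n)"
    using harm_le_one_plus_ln[OF assms] by (simp add: harm_def)
  finally show ?thesis .
qed

lemma sum_powr_le_rate:
  assumes "0 < \<alpha>"
  shows "\<exists>C\<ge>0. \<forall>n\<ge>3. real n powr (- 4 * \<alpha>) * (\<Sum>k\<in>{1..<n}. real k powr (2 * \<alpha> - 2))
    \<le> C * lemma5_rate \<alpha> n"
proof (cases "\<alpha> < 1/2")
  case True
  define Z where "Z = (\<Sum>k. real k powr (2 * \<alpha> - 2))"
  have summable: "summable (\<lambda>k. real k powr (2 * \<alpha> - 2))"
    using True by (simp add: summable_real_powr_iff)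
  have "real n powr (- 4 * \<alpha>) * (\<Sum>k\<in>{1..<n}. real k powr (2 * \<alpha> - 2)) \<le> Z * lemma5_rate \<alpha> n"
    for n
  proof -
    have "(\<Sum>k\<in>{1..<n}. real k powr (2 * \<alpha> - 2)) \<le> Z"
      unfolding Z_def using summable by (intro sum_le_suminf) auto
    then have "real n powr (- 4 * \<alpha>) * (\<Sum>k\<in>{1..<n}. real k powr (2 * \<alpha> - 2))
        \<le> real n powr (- 4 * \<alpha>) * Z"
      by (rule mult_left_mono) simp
    then show ?thesis using True by (simp add: lemma5_rate_def mult.commute)
  qed
  moreover have "0 \<le> Z" unfolding Z_def using summable by (intro suminf_nonneg) auto
  ultimately show ?thesis by blast
next
  case not_small: False
  show ?thesis
  proof (cases "\<alpha> = 1/2")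
    case True
    have "real n powr (- 2) * (\<Sum>k\<in>{1..<n}. real k powr (- 1)) \<le> 2 * (ln (real n) / (real n)\<^sup>2)"
      if "3 \<le> n" for n
    proof -
      have "ln 3 \<le> ln (real n)" using that by simp
      then have "1 \<le> ln (real n)" using ln3_gt_1 by linarith
      then have "(\<Sum>k\<in>{1..<n}. real k powr (- 1)) \<le> 2 * ln (real n)"
        using sum_inverse_le_one_plus_ln[of n] that by linarith
      then show ?thesis
        using that by (simp add: powr_minus_divide powr_realpow divide_right_mono)
    qed
    then show ?thesis unfolding True by (intro exI[of _ 2]) (simp add: lemma5_rate_def)
  next
    case False
    define s where "s = 2 * \<alpha> - 1"
    have s: "0 < s" using not_small False unfolding s_def by simp
    have "real n powr (- 4 * \<alpha>) * (\<Sum>k\<in>{1..<n}. real k powr (2 * \<alpha> - 2))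
        \<le> (1 + 1 / s) * lemma5_rate \<alpha> n" if "3 \<le> n" for n
    proof -
      have "real n powr (- 4 * \<alpha>) * (\<Sum>k\<in>{1..<n}. real k powr (2 * \<alpha> - 2))
          \<le> real n powr (- 4 * \<alpha>) * ((1 + 1 / s) * real n powr s)"
        using sum_powr_le[OF s, of n] that unfolding s_def by (intro mult_left_mono) auto
      also have "\<dots> = (1 + 1 / s) * real n powr (- (2 * \<alpha> + 1))"
        using that unfolding s_def by (simp add: powr_add[symmetric])
      finally show ?thesis using not_small False by (simp add: lemma5_rate_def)
    qed
    moreover have "0 \<le> 1 + 1 / s" using s by simp
    ultimately show ?thesis by blast
  qed
qed

section \<open>The waiting times\<close>

lemma integral_exponential_density_exp:
  assumes "0 < l" "0 \<le> b"
  shows "integrable (density lborel (exponential_density l)) (\<lambda>x. exp (- b * x))"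
    and "(\<integral>x. exp (- b * x) \<partial>density lborel (exponential_density l)) = l / (l + b)"
proof -
  have nonneg: "AE x in lborel. 0 \<le> exponential_density l x"
    using exponential_density_nonneg[OF assms(1)] by simp
  have "0 < l + b" using assms by simp
  then interpret shifted: prob_space "density lborel (exponential_density (l + b))"
    by (rule prob_space_exponential_density)
  have shifted_nonneg: "AE x in lborel. 0 \<le> exponential_density (l + b) x"
    using exponential_density_nonneg[OF \<open>0 < l + b\<close>] by simp
  have shifted_int: "integrable lborel (exponential_density (l + b))"
  proof -
    have "integrable (density lborel (exponential_density (l + b))) (\<lambda>_. 1::real)" by simp
    then show ?thesis by (subst (asm) integrable_density) (use shifted_nonneg in auto)
  qed
  have "integral\<^sup>L lborel (exponential_density (l + b)) = 1"
  proof -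
    have "integral\<^sup>L (density lborel (exponential_density (l + b))) (\<lambda>_. 1::real) = 1"
      using shifted.prob_space by simp
    then show ?thesis by (subst (asm) integral_density) (use shifted_nonneg in auto)
  qed
  moreover have eq: "(\<lambda>x. exponential_density l x *\<^sub>R exp (- b * x)) =
      (\<lambda>x. (l / (l + b)) * exponential_density (l + b) x)"
    using \<open>0 < l + b\<close> by (auto simp: exponential_density_def field_simps mult_exp_exp)
  ultimately show "integrable (density lborel (exponential_density l)) (\<lambda>x. exp (- b * x))"
    and "(\<integral>x. exp (- b * x) \<partial>density lborel (exponential_density l)) = l / (l + b)"
    using shifted_int by (simp_all add: integrable_density integral_density nonneg eq)
qed

text \<open>The rate is clamped to be positive so that every factor is a probability space, as
  the product locale requires; only the factors \<open>1..n\<close> enter \<open>yule_T n\<close>.\<close>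

definition waiting_time :: "nat \<Rightarrow> real measure" where
  "waiting_time k = density lborel (exponential_density (real (max k 1)))"

lemma prob_space_waiting_time: "prob_space (waiting_time k)"
  unfolding waiting_time_def by (rule prob_space_exponential_density) simp

interpretation waiting_time: product_sigma_finite waiting_time
  by (simp add: prob_space_waiting_time prob_space_imp_sigma_finite product_sigma_finite.intro)

lemma yule_T_eq_PiM: "yule_T n = PiM {1..n} waiting_time"
  unfolding yule_T_def waiting_time_def by (intro PiM_cong) auto

lemma prob_space_yule_T: "prob_space (yule_T n)"
  unfolding yule_T_eq_PiM by (rule prob_space_PiM) (simp add: prob_space_waiting_time)

lemma integral_yule_T_exp_linear:
  assumes "\<And>i. 0 \<le> b i"
  shows "integrable (yule_T n) (\<lambda>T. exp (- (\<Sum>i\<in>{1..n}. b i * T i)))"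
    and "(\<integral>T. exp (- (\<Sum>i\<in>{1..n}. b i * T i)) \<partial>yule_T n) = (\<Prod>i\<in>{1..n}. real i / (real i + b i))"
proof -
  have factor: "integrable (waiting_time i) (\<lambda>x. exp (- b i * x))"
    "(\<integral>x. exp (- b i * x) \<partial>waiting_time i) = real i / (real i + b i)" if "i \<in> {1..n}" for i
    using that assms integral_exponential_density_exp[of "real i" "b i"]
    by (auto simp: waiting_time_def max_def)
  have exp_prod: "exp (- (\<Sum>i\<in>{1..n}. b i * T i)) = (\<Prod>i\<in>{1..n}. exp (- b i * T i))" for T
    by (simp add: exp_sum sum_negf[symmetric])
  show "integrable (yule_T n) (\<lambda>T. exp (- (\<Sum>i\<in>{1..n}. b i * T i)))"
    unfolding exp_prod yule_T_eq_PiM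
    using waiting_time.product_integrable_prod[of "{1..n}" "\<lambda>i x. exp (- b i * x)"] factor by simp
  have "(\<integral>T. exp (- (\<Sum>i\<in>{1..n}. b i * T i)) \<partial>yule_T n)
      = (\<Prod>i\<in>{1..n}. \<integral>x. exp (- b i * x) \<partial>waiting_time i)"
    unfolding exp_prod yule_T_eq_PiM
    using waiting_time.product_integral_prod[of "{1..n}" "\<lambda>i x. exp (- b i * x)"] factor by simp
  also have "\<dots> = (\<Prod>i\<in>{1..n}. real i / (real i + b i))"
    using factor(2) by (rule prod.cong[OF refl])
  finally show "(\<integral>T. exp (- (\<Sum>i\<in>{1..n}. b i * T i)) \<partial>yule_T n) = (\<Prod>i\<in>{1..n}. real i / (real i + b i))" .
qed

lemma prod_two_level_weights:
  assumes "k \<le> n"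
  shows "(\<Prod>i\<in>{1..n}. real i / (real i + (if k < i then b' else b)))
    = laplace_ratio b 0 k * laplace_ratio b' k n"
proof -
  let ?f = "\<lambda>i. real i / (real i + (if k < i then b' else b))"
  have "{1..n} = {0<..k} \<union> {k<..n}" using assms by auto
  then have "prod ?f {1..n} = prod ?f {0<..k} * prod ?f {k<..n}"
    by (simp add: prod.union_disjoint ivl_disj_int_two(4))
  also have "prod ?f {0<..k} = laplace_ratio b 0 k"
    unfolding laplace_ratio_def by (intro prod.cong) auto
  also have "prod ?f {k<..n} = laplace_ratio b' k n"
    unfolding laplace_ratio_def by (intro prod.cong) auto
  finally show ?thesis .
qed

definition tail_discount :: "real \<Rightarrow> nat \<Rightarrow> nat \<Rightarrow> (nat \<Rightarrow> real) \<Rightarrow> real" where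
  "tail_discount \<alpha> n k T = exp (- 2 * \<alpha> * (\<Sum>i\<in>{k+1..n}. T i))"

lemma tail_discount_eq_exp_linear:
  "tail_discount \<alpha> n k T = exp (- (\<Sum>i\<in>{1..n}. (if k < i then 2 * \<alpha> else 0) * T i))"
proof -
  have "(\<Sum>i\<in>{k+1..n}. T i) = (\<Sum>i\<in>{1..n}. if k < i then T i else 0)"
    by (subst sum.inter_filter[symmetric]) (auto intro!: sum.cong)
  then have "2 * \<alpha> * (\<Sum>i\<in>{k+1..n}. T i) = (\<Sum>i\<in>{1..n}. (if k < i then 2 * \<alpha> else 0) * T i)"
    by (simp add: sum_distrib_left) (intro sum.cong; simp)
  then show ?thesis unfolding tail_discount_def by simp
qed

lemma tail_discount_mult_eq_exp_linear:
  "tail_discount \<alpha> n 0 T * tail_discount \<alpha> n k T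
    = exp (- (\<Sum>i\<in>{1..n}. (if k < i then 2 * (2 * \<alpha>) else 2 * \<alpha>) * T i))"
  unfolding tail_discount_eq_exp_linear mult_exp_exp sum_negf[symmetric] sum.distrib[symmetric]
  by (intro arg_cong[where f=exp] sum.cong) (auto simp: algebra_simps)

lemma integrable_tail_discount:
  assumes "0 \<le> \<alpha>"
  shows "integrable (yule_T n) (tail_discount \<alpha> n k)"
    and "integrable (yule_T n) (\<lambda>T. tail_discount \<alpha> n 0 T * tail_discount \<alpha> n k T)"
proof -
  show "integrable (yule_T n) (tail_discount \<alpha> n k)"
    unfolding tail_discount_eq_exp_linear[abs_def]
    by (rule integral_yule_T_exp_linear(1)) (use assms in auto)
  show "integrable (yule_T n) (\<lambda>T. tail_discount \<alpha> n 0 T * tail_discount \<alpha> n k T)"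
    unfolding tail_discount_mult_eq_exp_linear
    by (rule integral_yule_T_exp_linear(1)) (use assms in auto)
qed

lemma covariance_tail_discount:
  assumes "0 \<le> \<alpha>" "k \<le> n"
  shows "covariance (yule_T n) (tail_discount \<alpha> n 0) (tail_discount \<alpha> n k)
    = laplace_ratio (2 * \<alpha>) 0 k * (laplace_ratio (2 * (2 * \<alpha>)) k n - (laplace_ratio (2 * \<alpha>) k n)\<^sup>2)"
proof -
  have "(\<integral>T. tail_discount \<alpha> n k T \<partial>yule_T n) = laplace_ratio (2 * \<alpha>) k n" if "k \<le> n" for k
    unfolding tail_discount_eq_exp_linear
    using integral_yule_T_exp_linear(2)[of "\<lambda>i. if k < i then 2 * \<alpha> else 0"] assms(1)
      prod_two_level_weights[OF that, where b=0 and b'="2 * \<alpha>"]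
    by simp
  moreover have "(\<integral>T. tail_discount \<alpha> n 0 T * tail_discount \<alpha> n k T \<partial>yule_T n)
      = laplace_ratio (2 * \<alpha>) 0 k * laplace_ratio (2 * (2 * \<alpha>)) k n"
    unfolding tail_discount_mult_eq_exp_linear
    using integral_yule_T_exp_linear(2)[of "\<lambda>i. if k < i then 2 * (2 * \<alpha>) else 2 * \<alpha>"] assms
      prod_two_level_weights[OF assms(2), where b="2 * \<alpha>" and b'="2 * (2 * \<alpha>)"]
    by simp
  ultimately show ?thesis
    using laplace_ratio_split[OF le0 assms(2), of "2 * \<alpha>"] assms(2)
    by (simp add: covariance_def power2_eq_square algebra_simps)
qed

section \<open>Topology and jumps\<close>

lemma set_pmf_of_set_lessThan: "0 < (k::nat) \<Longrightarrow> set_pmf (pmf_of_set {..<k}) = {..<k}"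
  by (subst set_pmf_of_set) (auto simp: set_eq_iff intro: exI[of _ 0])

lemma finite_set_pmf_yule_topo: "finite (set_pmf (yule_topo n))"
  unfolding yule_topo_def
  by (rule finite_subset[OF set_Pi_pmf_subset' finite_PiE_dflt]) (auto simp: set_pmf_of_set_lessThan)

lemma finite_set_pmf_yule_jumps: "finite (set_pmf (yule_jumps n p))"
  unfolding yule_jumps_def by (rule finite_subset[OF set_Pi_pmf_subset']) auto

lemma finite_set_pmf_yule_tree: "finite (set_pmf (pair_pmf (yule_topo n) (yule_jumps n p)))"
  by (simp add: finite_set_pmf_yule_topo finite_set_pmf_yule_jumps)

lemma expectation_pair_pmf_finite:
  fixes h :: "'a \<times> 'b \<Rightarrow> real"
  assumes "finite (set_pmf A)" "finite (set_pmf B)"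
  shows "measure_pmf.expectation (pair_pmf A B) h
      = measure_pmf.expectation A (\<lambda>a. measure_pmf.expectation B (\<lambda>b. h (a, b)))"
    and "measure_pmf.expectation (pair_pmf A B) h
      = measure_pmf.expectation B (\<lambda>b. measure_pmf.expectation A (\<lambda>a. h (a, b)))"
proof -
  have pair: "measure_pmf.expectation (pair_pmf A B) h
      = (\<Sum>a\<in>set_pmf A. \<Sum>b\<in>set_pmf B. h (a, b) * (pmf A a * pmf B b))"
    using assms
    by (subst integral_measure_pmf_real[where A="set_pmf A \<times> set_pmf B"])
       (auto simp: set_pair_pmf sum.cartesian_product pmf_pair intro!: sum.cong)
  have "measure_pmf.expectation A g = (\<Sum>a\<in>set_pmf A. g a * pmf A a)" for g
    by (rule integral_measure_pmf_real) (use assms in auto)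
  moreover have "measure_pmf.expectation B g = (\<Sum>b\<in>set_pmf B. g b * pmf B b)" for g
    by (rule integral_measure_pmf_real) (use assms in auto)
  ultimately show "measure_pmf.expectation (pair_pmf A B) h
      = measure_pmf.expectation A (\<lambda>a. measure_pmf.expectation B (\<lambda>b. h (a, b)))"
    and "measure_pmf.expectation (pair_pmf A B) h
      = measure_pmf.expectation B (\<lambda>b. measure_pmf.expectation A (\<lambda>a. h (a, b)))"
    unfolding pair by (simp_all add: sum_distrib_left sum_distrib_right mult_ac sum.swap[of _ "set_pmf A"])
qed

lemma lab_steps_Suc: "lab_steps c (Suc tp) l (Suc i) = lab_steps c tp (parent_label c (Suc tp) l) i"
  by (induction i) auto

lemma lab_steps_cong: "(\<And>m. m \<le> tp \<Longrightarrow> c m = c' m) \<Longrightarrow> lab_steps c tp l i = lab_steps c' tp l i"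
  by (induction i) (auto simp: parent_label_def)

lemma passes_fun_upd:
  assumes "1 \<le> k" "k < n"
  shows "passes (c(n := y)) (Suc n) a k = passes c n (if a = n then y else a) k"
proof -
  have steps: "Suc n - 1 - (k - 1) = Suc (n - k)" "n - 1 - (k - 1) = n - k" "n = Suc (n - 1)"
    using assms by auto
  have "tip_label (c(n := y)) (Suc n) a (k - 1)
      = lab_steps (c(n := y)) (n - 1) (parent_label (c(n := y)) n a) (n - k)"
    unfolding tip_label_def steps(1) using lab_steps_Suc[of "c(n := y)" "n - 1"] steps(3) by simp
  also have "\<dots> = lab_steps c (n - 1) (if a = n then y else a) (n - k)"
  proof -
    have "parent_label (c(n := y)) n a = (if a = n then y else a)" by (simp add: parent_label_def)
    then show ?thesis by (simp only:) (rule lab_steps_cong, use assms in auto)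
  qed
  finally show ?thesis
    unfolding passes_def tip_label_def steps(2) using assms by simp
qed

definition clade_size :: "(nat \<Rightarrow> nat) \<Rightarrow> nat \<Rightarrow> nat \<Rightarrow> real" where
  "clade_size c n k = (\<Sum>a<n. if passes c n a k then 1 else 0)"

lemma clade_size_fun_upd:
  assumes "1 \<le> k" "k < n"
  shows "clade_size (c(n := y)) (Suc n) k = clade_size c n k + (if passes c n y k then 1 else 0)"
  unfolding clade_size_def using assms by (simp add: passes_fun_upd)

lemma clade_size_at_birth:
  assumes "1 \<le> k" "c k < k"
  shows "clade_size c (Suc k) k = 2"
proof -
  have "passes c (Suc k) a k \<longleftrightarrow> a = k \<or> a = c k" for a
  proof -
    have "Suc k - 1 - (k - 1) = Suc 0" using assms(1) by auto
    then show ?thesis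
      unfolding passes_def tip_label_def using assms(2) by (auto simp: parent_label_def)
  qed
  then have "clade_size c (Suc k) k = (\<Sum>a<k. if a = k \<or> a = c k then 1 else 0) + 1"
    unfolding clade_size_def by simp
  also have "(\<Sum>a<k. if a = k \<or> a = c k then 1 else 0) = (\<Sum>a<k. if a = c k then 1 else 0 :: real)"
    by (intro sum.cong) auto
  finally show ?thesis using assms(2) by simp
qed

lemma set_pmf_yule_topo_lt:
  assumes "c \<in> set_pmf (yule_topo n)" "k \<in> {1..<n}"
  shows "c k < k"
proof -
  have "c \<in> PiE_dflt {1..<n} 0 (set_pmf \<circ> (\<lambda>k. pmf_of_set {..<k}))"
    using assms(1) set_Pi_pmf_subset'[of "{1..<n}" 0 "\<lambda>k. pmf_of_set {..<k}"]
    unfolding yule_topo_def by auto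
  then show ?thesis using assms(2) by (auto simp: PiE_dflt_def set_pmf_of_set_lessThan)
qed

lemma yule_topo_Suc:
  assumes "1 \<le> n"
  shows "yule_topo (Suc n) = map_pmf (\<lambda>(y, c). c(n := y)) (pair_pmf (pmf_of_set {..<n}) (yule_topo n))"
proof -
  have "{1..<Suc n} = insert n {1..<n}" using assms by auto
  then show ?thesis unfolding yule_topo_def by (simp add: Pi_pmf_insert)
qed

lemma expectation_clade_size:
  assumes "1 \<le> k" "k < n"
  shows "measure_pmf.expectation (yule_topo n) (\<lambda>c. clade_size c n k) = 2 * real n / (real k + 1)"
  using Suc_leI[OF assms(2)]
proof (induction n rule: nat_induct_at_least)
  case base
  have "AE c in measure_pmf (yule_topo (Suc k)). clade_size c (Suc k) k = 2"
    using assms(1) by (intro AE_pmfI clade_size_at_birth set_pmf_yule_topo_lt) auto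
  then have "measure_pmf.expectation (yule_topo (Suc k)) (\<lambda>c. clade_size c (Suc k) k) = 2"
    by (simp add: integral_cong_AE)
  then show ?case by (simp add: field_simps)
next
  case (Suc n)
  have n: "1 \<le> n" "k < n" using Suc assms(1) by auto
  let ?U = "pmf_of_set {..<n}"
  have finite_U: "finite (set_pmf ?U)" using n by (simp add: set_pmf_of_set_lessThan)
  have attach: "measure_pmf.expectation ?U (\<lambda>y. clade_size c n k + (if passes c n y k then 1 else 0))
      = (1 + 1 / real n) * clade_size c n k" for c
  proof -
    have "measure_pmf.expectation ?U (\<lambda>y. clade_size c n k + (if passes c n y k then 1 else 0))
        = (\<Sum>y<n. clade_size c n k + (if passes c n y k then 1 else 0)) / real n"
      using n by (subst integral_pmf_of_set) auto
    also have "\<dots> = (real n * clade_size c n k + clade_size c n k) / real n"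
      unfolding clade_size_def by (simp add: sum.distrib)
    finally show ?thesis using n by (simp add: field_simps)
  qed
  have "measure_pmf.expectation (yule_topo (Suc n)) (\<lambda>c. clade_size c (Suc n) k)
      = measure_pmf.expectation (pair_pmf ?U (yule_topo n))
          (\<lambda>(y, c). clade_size c n k + (if passes c n y k then 1 else 0))"
    unfolding yule_topo_Suc[OF n(1)] using clade_size_fun_upd[OF assms(1) n(2)]
    by (simp add: case_prod_unfold)
  also have "\<dots> = measure_pmf.expectation (yule_topo n) (\<lambda>c. (1 + 1 / real n) * clade_size c n k)"
    by (simp add: expectation_pair_pmf_finite(2)[OF finite_U finite_set_pmf_yule_topo] attach)
  also have "\<dots> = (1 + 1 / real n) * (2 * real n / (real k + 1))"
    using Suc.IH by simp
  also have "\<dots> = 2 * real (Suc n) / (real k + 1)"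
    using n by (simp add: divide_simps)
  finally show ?case .
qed

lemma expectation_jump_toward:
  assumes "1 \<le> k" "k < n" "0 \<le> p" "p \<le> 1"
  shows "measure_pmf.expectation (yule_jumps n p) (\<lambda>j. if jump_toward c j n a k then 1 else 0) = p"
proof -
  define g where "g x = (if (if tip_label c n a k = k then snd x else fst x) then 1 else 0 :: real)"
    for x :: "bool \<times> bool"
  have "measure_pmf.expectation (yule_jumps n p) (\<lambda>j. if jump_toward c j n a k then 1 else 0)
      = measure_pmf.expectation (map_pmf (\<lambda>j. j k) (yule_jumps n p)) g"
    by (simp add: g_def jump_toward_def)
  also have "map_pmf (\<lambda>j. j k) (yule_jumps n p) = pair_pmf (bernoulli_pmf p) (bernoulli_pmf p)"
    unfolding yule_jumps_def using assms(1,2) by (subst Pi_pmf_component) auto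
  also have "measure_pmf.expectation (pair_pmf (bernoulli_pmf p) (bernoulli_pmf p)) g = p"
    using assms(3,4) by (simp add: expectation_pair_pmf_finite(1) g_def algebra_simps)
  finally show ?thesis .
qed

definition path_jump_frac :: "nat \<Rightarrow> nat \<Rightarrow> (nat \<Rightarrow> nat) \<Rightarrow> (nat \<Rightarrow> bool \<times> bool) \<Rightarrow> real" where
  "path_jump_frac n k c j =
     (\<Sum>(a, b)\<in>{(a, b). a < b \<and> b < n}. if k \<in> path_nodes c n a b \<and> jump_toward c j n a k then 1 else 0)
       / real (n choose 2)"

lemma real_choose_two: "real (n choose 2) = real n * (real n - 1) / 2"
proof (cases n)
  case (Suc m)
  have "even (n * (n - 1))" by (cases "even n") auto
  then have "real (n * (n - 1) div 2) = real (n * (n - 1)) / 2" by (simp add: real_of_nat_div)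
  then show ?thesis unfolding choose_two using Suc by (simp add: of_nat_diff algebra_simps)
qed simp

lemma path_jump_frac_le:
  "path_jump_frac n k c j \<le> real n / real (n choose 2)
    * (\<Sum>a<n. (if passes c n a k then 1 else 0) * (if jump_toward c j n a k then 1 else 0))"
proof -
  let ?g = "\<lambda>a. (if passes c n a k then 1 else 0) * (if jump_toward c j n a k then 1 else 0 :: real)"
  have "(\<Sum>(a, b)\<in>{(a, b). a < b \<and> b < n}.
        if k \<in> path_nodes c n a b \<and> jump_toward c j n a k then 1 else 0 :: real)
      \<le> (\<Sum>(a, b)\<in>{(a, b). a < b \<and> b < n}. ?g a)"
    by (intro sum_mono) (auto simp: path_nodes_def common_nodes_def)
  also have "\<dots> \<le> (\<Sum>(a, b)\<in>{..<n} \<times> {..<n}. ?g a)"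
    by (intro sum_mono2) auto
  also have "\<dots> = real n * (\<Sum>a<n. ?g a)"
    by (subst sum.cartesian_product[symmetric]) (simp add: sum_distrib_left)
  finally show ?thesis
    unfolding path_jump_frac_def by (simp add: divide_right_mono)
qed

lemma expectation_path_jump_frac:
  assumes "1 \<le> k" "k < n" "0 \<le> p" "p \<le> 1"
  defines "E \<equiv> measure_pmf.expectation (pair_pmf (yule_topo n) (yule_jumps n p))
    (\<lambda>(c, j). path_jump_frac n k c j)"
  shows "0 \<le> E" and "E \<le> 8 * p / real k"
proof -
  let ?Q = "pair_pmf (yule_topo n) (yule_jumps n p)"
  let ?jumps = "\<lambda>c j. \<Sum>a<n. (if passes c n a k then 1 else 0) * (if jump_toward c j n a k then 1 else 0 :: real)"
  show "0 \<le> E"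
    unfolding E_def path_jump_frac_def
    by (intro Bochner_Integration.integral_nonneg) (auto simp: case_prod_unfold intro!: divide_nonneg_nonneg sum_nonneg)
  have "E \<le> measure_pmf.expectation ?Q (\<lambda>(c, j). real n / real (n choose 2) * ?jumps c j)"
    unfolding E_def using path_jump_frac_le
    by (intro integral_mono integrable_measure_pmf_finite finite_set_pmf_yule_tree)
       (auto simp: case_prod_unfold)
  also have "\<dots> = real n / real (n choose 2)
      * measure_pmf.expectation (yule_topo n) (\<lambda>c. measure_pmf.expectation (yule_jumps n p) (?jumps c))"
    by (simp add: case_prod_unfold expectation_pair_pmf_finite(1)[OF finite_set_pmf_yule_topo finite_set_pmf_yule_jumps])
  also have "\<dots> = real n / real (n choose 2) * (p * (2 * real n / (real k + 1)))"
  proof -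
    have "measure_pmf.expectation (yule_jumps n p) (?jumps c) = p * clade_size c n k" for c
      using expectation_jump_toward[OF assms(1-4)]
      by (subst Bochner_Integration.integral_sum)
         (auto intro: integrable_measure_pmf_finite finite_set_pmf_yule_jumps
               simp: clade_size_def sum_distrib_left mult.commute)
    then show ?thesis using expectation_clade_size[OF assms(1,2)] by simp
  qed
  also have "\<dots> = p * (4 * (real n / (real n - 1)) / (real k + 1))"
    using assms(1,2) by (simp add: real_choose_two divide_simps)
  also have "\<dots> \<le> p * (4 * 2 / real k)"
  proof -
    have "4 * (real n / (real n - 1)) \<le> 4 * 2" using assms(1,2) by (simp add: divide_simps)
    then have "4 * (real n / (real n - 1)) / (real k + 1) \<le> 4 * 2 / real k"
      using assms(1) by (intro frac_le) auto
    then show ?thesis using assms(3) by (rule mult_left_mono)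
  qed
  finally show "E \<le> 8 * p / real k" by (simp add: mult.commute)
qed

section \<open>The covariance\<close>

lemma Psi_pair_eq_sum:
  "Psi_pair \<alpha> n T c j a b =
    (\<Sum>k\<in>{1..<n}. (if k \<in> path_nodes c n a b \<and> jump_toward c j n a k then 1 else 0) * tail_discount \<alpha> n k T)"
proof -
  let ?jump = "\<lambda>k. if jump_toward c j n a k then 1 else 0 :: real"
  have "path_nodes c n a b = {1..<n} \<inter> path_nodes c n a b"
    unfolding path_nodes_def common_nodes_def by auto
  then have "Psi_pair \<alpha> n T c j a b = (\<Sum>k\<in>{1..<n} \<inter> path_nodes c n a b. ?jump k * tail_discount \<alpha> n k T)"
    unfolding Psi_pair_def tail_discount_def by simp
  also have "\<dots> = (\<Sum>k\<in>{1..<n}. if k \<in> path_nodes c n a b then ?jump k * tail_discount \<alpha> n k T else 0)"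
    by (rule sum.inter_restrict) simp
  also have "\<dots> = (\<Sum>k\<in>{1..<n}.
      (if k \<in> path_nodes c n a b \<and> jump_toward c j n a k then 1 else 0) * tail_discount \<alpha> n k T)"
    by (intro sum.cong) auto
  finally show ?thesis .
qed

lemma cond_Psi_eq_sum:
  "cond_Psi \<alpha> n (T, c, j) = (\<Sum>k\<in>{1..<n}. path_jump_frac n k c j * tail_discount \<alpha> n k T)"
proof -
  let ?P = "{(a, b). a < b \<and> b < n}"
  let ?on_path = "\<lambda>k a b. if k \<in> path_nodes c n a b \<and> jump_toward c j n a k then 1 else 0 :: real"
  have "cond_Psi \<alpha> n (T, c, j)
      = (\<Sum>(a, b)\<in>?P. \<Sum>k\<in>{1..<n}. ?on_path k a b * tail_discount \<alpha> n k T) / real (n choose 2)"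
    by (simp add: cond_Psi_def Psi_pair_eq_sum)
  also have "\<dots> = (\<Sum>k\<in>{1..<n}. \<Sum>(a, b)\<in>?P. ?on_path k a b * tail_discount \<alpha> n k T) / real (n choose 2)"
    by (subst sum.swap) (simp add: case_prod_unfold)
  finally show ?thesis
    by (simp add: path_jump_frac_def sum_divide_distrib sum_distrib_right case_prod_unfold)
qed

lemma integral_pair_measure_pmf_mult:
  fixes f :: "'a \<Rightarrow> real" and g :: "'b \<Rightarrow> real"
  assumes "prob_space M" "finite (set_pmf Q)" "integrable M f"
  shows "integrable (M \<Otimes>\<^sub>M measure_pmf Q) (\<lambda>\<omega>. f (fst \<omega>) * g (snd \<omega>))"
    and "(\<integral>\<omega>. f (fst \<omega>) * g (snd \<omega>) \<partial>(M \<Otimes>\<^sub>M measure_pmf Q))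
      = integral\<^sup>L M f * measure_pmf.expectation Q g"
proof -
  interpret M: prob_space M by fact
  interpret pair_sigma_finite M "measure_pmf Q"
    by (simp add: M.sigma_finite_measure_axioms measure_pmf.sigma_finite_measure_axioms
        pair_sigma_finite_def)
  have [measurable]: "f \<in> borel_measurable M" using assms(3) by auto
  have g_int: "integrable (measure_pmf Q) g" "integrable (measure_pmf Q) (\<lambda>y. norm (g y))"
    using assms(2) by (auto intro: integrable_measure_pmf_finite)
  show int: "integrable (M \<Otimes>\<^sub>M measure_pmf Q) (\<lambda>\<omega>. f (fst \<omega>) * g (snd \<omega>))"
  proof (rule Fubini_integrable)
    have "(\<lambda>x. \<integral>y. norm (f (fst (x, y)) * g (snd (x, y))) \<partial>measure_pmf Q)
        = (\<lambda>x. norm (f x) * (\<integral>y. norm (g y) \<partial>measure_pmf Q))"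
      by (simp add: abs_mult)
    then show "integrable M (\<lambda>x. \<integral>y. norm (f (fst (x, y)) * g (snd (x, y))) \<partial>measure_pmf Q)"
      using assms(3) by simp
  qed (use g_int in simp_all)
  show "(\<integral>\<omega>. f (fst \<omega>) * g (snd \<omega>) \<partial>(M \<Otimes>\<^sub>M measure_pmf Q))
      = integral\<^sup>L M f * measure_pmf.expectation Q g"
    using integral_fst'[OF int] by simp
qed

lemma yule_cov_eq_sum:
  assumes "0 \<le> \<alpha>"
  shows "yule_cov \<alpha> p n = (\<Sum>k\<in>{1..<n}.
    covariance (yule_T n) (tail_discount \<alpha> n 0) (tail_discount \<alpha> n k)
      * measure_pmf.expectation (pair_pmf (yule_topo n) (yule_jumps n p)) (\<lambda>(c, j). path_jump_frac n k c j))"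
proof -
  let ?Q = "pair_pmf (yule_topo n) (yule_jumps n p)"
  let ?E = "\<lambda>k. measure_pmf.expectation ?Q (\<lambda>(c, j). path_jump_frac n k c j)"
  note pair_integral = integral_pair_measure_pmf_mult[OF prob_space_yule_T finite_set_pmf_yule_tree]
  note integrable = integrable_tail_discount[OF assms]
  have height: "exp (- 2 * \<alpha> * height n \<omega>) = tail_discount \<alpha> n 0 (fst \<omega>) * 1" for \<omega>
    unfolding tail_discount_def height_def by simp
  have cond: "cond_Psi \<alpha> n \<omega> = (\<Sum>k\<in>{1..<n}. tail_discount \<alpha> n k (fst \<omega>)
      * (\<lambda>(c, j). path_jump_frac n k c j) (snd \<omega>))" for \<omega>
    by (cases \<omega>) (simp add: cond_Psi_eq_sum mult.commute)
  have mixed: "exp (- 2 * \<alpha> * height n \<omega>) * cond_Psi \<alpha> n \<omega> = (\<Sum>k\<in>{1..<n}.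
      (\<lambda>T. tail_discount \<alpha> n 0 T * tail_discount \<alpha> n k T) (fst \<omega>)
        * (\<lambda>(c, j). path_jump_frac n k c j) (snd \<omega>))" for \<omega>
    unfolding height cond by (simp add: sum_distrib_left mult.assoc)
  have "(\<integral>\<omega>. exp (- 2 * \<alpha> * height n \<omega>) \<partial>yule_space n p) = integral\<^sup>L (yule_T n) (tail_discount \<alpha> n 0)"
    unfolding height yule_space_def using pair_integral(2)[OF integrable(1), where g="\<lambda>_. 1"] by simp
  moreover have "integral\<^sup>L (yule_space n p) (cond_Psi \<alpha> n)
      = (\<Sum>k\<in>{1..<n}. integral\<^sup>L (yule_T n) (tail_discount \<alpha> n k) * ?E k)"
    unfolding cond yule_space_def
    by (subst Bochner_Integration.integral_sum) (use pair_integral[OF integrable(1)] in auto)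
  moreover have "(\<integral>\<omega>. exp (- 2 * \<alpha> * height n \<omega>) * cond_Psi \<alpha> n \<omega> \<partial>yule_space n p)
      = (\<Sum>k\<in>{1..<n}. (\<integral>T. tail_discount \<alpha> n 0 T * tail_discount \<alpha> n k T \<partial>yule_T n) * ?E k)"
    unfolding mixed yule_space_def
    by (subst Bochner_Integration.integral_sum) (use pair_integral[OF integrable(2)] in auto)
  ultimately show ?thesis
    unfolding yule_cov_def covariance_def
    by (simp add: sum_distrib_left sum_subtractf algebra_simps)
qed

lemma yule_cov_le:
  assumes "0 < \<alpha>" "0 \<le> p" "p \<le> 1"
  defines "K \<equiv> (2 * \<alpha>)\<^sup>2 * exp (5 * (2 * \<alpha>)\<^sup>2 + 2 * \<alpha>)"
  shows "yule_cov \<alpha> p n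
    \<le> 8 * p * K * real n powr (- 4 * \<alpha>) * (\<Sum>k\<in>{1..<n}. real k powr (2 * \<alpha> - 2))"
proof -
  let ?E = "\<lambda>k. measure_pmf.expectation (pair_pmf (yule_topo n) (yule_jumps n p))
    (\<lambda>(c, j). path_jump_frac n k c j)"
  let ?cov = "\<lambda>k. covariance (yule_T n) (tail_discount \<alpha> n 0) (tail_discount \<alpha> n k)"
  have "?cov k * ?E k \<le> 8 * p * K * real n powr (- 4 * \<alpha>) * real k powr (2 * \<alpha> - 2)"
    if k: "k \<in> {1..<n}" for k
  proof -
    have cov: "?cov k \<le> K * real k powr (2 * \<alpha> - 1) * real n powr (- 4 * \<alpha>)"
      using laplace_ratio_cov_bound[of "2 * \<alpha>" k n] covariance_tail_discount[of \<alpha> k n] assms(1) k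
      by (simp add: K_def)
    have "?cov k * ?E k \<le> (K * real k powr (2 * \<alpha> - 1) * real n powr (- 4 * \<alpha>)) * (8 * p / real k)"
      using k assms(2,3) expectation_path_jump_frac[of k n p]
      by (intro mult_mono[OF cov]) (auto simp: K_def)
    also have "\<dots> = 8 * p * K * real n powr (- 4 * \<alpha>) * real k powr (2 * \<alpha> - 2)"
      using k by (simp add: powr_diff field_simps power2_eq_square)
    finally show ?thesis .
  qed
  then have "(\<Sum>k\<in>{1..<n}. ?cov k * ?E k)
      \<le> (\<Sum>k\<in>{1..<n}. 8 * p * K * real n powr (- 4 * \<alpha>) * real k powr (2 * \<alpha> - 2))"
    by (rule sum_mono)
  then show ?thesis
    using assms(1) by (simp add: yule_cov_eq_sum sum_distrib_left)
qed

theorem lemma5: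
  fixes \<alpha> :: real
  assumes "\<alpha> > 0"
  shows "\<exists>C>0. \<forall>p::real. 0 \<le> p \<and> p \<le> 1 \<longrightarrow>
           (\<exists>e::nat \<Rightarrow> real. e \<longlonglongrightarrow> 0 \<and>
              (\<forall>\<^sub>F n in sequentially. yule_cov \<alpha> p n \<le> (1 + e n) * (p * C * lemma5_rate \<alpha> n)))"
proof -
  define K where "K = (2 * \<alpha>)\<^sup>2 * exp (5 * (2 * \<alpha>)\<^sup>2 + 2 * \<alpha>)"
  obtain C' where "0 \<le> C'" and rate: "\<And>n. 3 \<le> n \<Longrightarrow>
      real n powr (- 4 * \<alpha>) * (\<Sum>k\<in>{1..<n}. real k powr (2 * \<alpha> - 2)) \<le> C' * lemma5_rate \<alpha> n"
    using sum_powr_le_rate[OF assms] by blast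
  define C where "C = 8 * K * C' + 1"
  have "0 < C" unfolding C_def K_def using \<open>0 \<le> C'\<close> by (simp add: add_nonneg_pos)
  moreover have "yule_cov \<alpha> p n \<le> (1 + 0) * (p * C * lemma5_rate \<alpha> n)"
    if p: "0 \<le> p" "p \<le> 1" and n: "3 \<le> n" for p n
  proof -
    have "0 \<le> lemma5_rate \<alpha> n" using n by (simp add: lemma5_rate_def)
    have "0 \<le> p * (8 * K)" using p by (simp add: K_def)
    have "yule_cov \<alpha> p n
        \<le> p * (8 * K) * (real n powr (- 4 * \<alpha>) * (\<Sum>k\<in>{1..<n}. real k powr (2 * \<alpha> - 2)))"
      using yule_cov_le[OF assms p, folded K_def] by (simp add: mult_ac)
    also have "\<dots> \<le> p * (8 * K) * (C' * lemma5_rate \<alpha> n)"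
      using rate[OF n] \<open>0 \<le> p * (8 * K)\<close> by (rule mult_left_mono)
    also have "\<dots> \<le> p * C * lemma5_rate \<alpha> n"
      unfolding C_def using p \<open>0 \<le> lemma5_rate \<alpha> n\<close> by (simp add: algebra_simps)
    finally show ?thesis by simp
  qed
  ultimately show ?thesis
    by (intro exI[of _ C] conjI allI impI exI[of _ "\<lambda>_. 0"] eventually_sequentiallyI[of 3]) auto
qed

end
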